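(* Let $Q=\langle b\rangle\ltimes_{(g,\gamma)}X$. For all $i,j,k\in\mathbb Z$ and $x,y,z\in X$, $$[(b^i,x),(b^j,y),(b^k,z)]=\Big(1,\ \Sigma_{I(i+j,i+j+k)}(x,y)+\Sigma_{I(i+k,i+j+k)}(x,z)+\Sigma_{I(j+k,i+j+k)}(y,z)\Big).$$
   Context: Let $(X,+)$ be an abelian group and $(g,\gamma)$ a construction pair on it: $g$ a permutation of $X$, $\gamma:X\times X\to X$ symmetric, alternating, biadditive, with (C1) $g^{-1}(g(x)+g(y))=x+y+\gamma(x,y)+g^{-1}(\gamma(x,y))+g^{-2}(\gamma(x,y))$, (C2) $\gamma(\gamma(x,y),z)=0$, (C3) $g^{-1}(\gamma(x,y))=\gamma(g(x),y)$ for all $x,y,z$. Let $\mathrm{Rad}(\gamma)=\{x:\gamma(x,y)=0\ \forall y\}$ and $r(g,\gamma)$ the least positive $r$ with $\sum_{0\le k<r}g^k(x)\in\mathrm{Rad}(\gamma)$ for all $x$ ($\infty$ if none). $I(i,j)$ is $\emptyset$ if $i=j$, $\{i,\dots,j-1\}$ if $i<j$, $\{j,\dots,i-1\}$ if $j<i$. For $U\subseteq\mathbb Z$, $\Sigma_U(x,y)=\sum_{k\in U}g^{-k}(\gamma(x,y))$. For a cyclic group $C=\langle b\rangle$ such that (if finite) $|g|$ and $r(g,\gamma)$ divide $|C|$, $C\ltimes_{(g,\gamma)}X$ is the Moufang loop on $C\times X$ with multiplication $(b^i,x)(b^j,y)=(b^{i+j},g^{-j}(x)+y+\Sigma_{I(i+j,-j)}(x,y))$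 and neutral element $(1,0)$. The associator $[u,v,w]$ in a loop is defined by $(u\cdot vw)[u,v,w]=uv\cdot w$. *)

theory Defs
  imports Main
begin

definition gpow :: "('a \<Rightarrow> 'a) \<Rightarrow> int \<Rightarrow> 'a \<Rightarrow> 'a" where
  "gpow g k = (if 0 \<le> k then g ^^ nat k else (inv g) ^^ nat (- k))"

definition construction_pair :: "('a::ab_group_add \<Rightarrow> 'a) \<Rightarrow> ('a \<Rightarrow> 'a \<Rightarrow> 'a) \<Rightarrow> bool" where
  "construction_pair g \<gamma> \<longleftrightarrow>
     bij g \<and>
     (\<forall>x y. \<gamma> x y = \<gamma> y x) \<and>
     (\<forall>x. \<gamma> x x = 0) \<and>
     (\<forall>x y z. \<gamma> (x + y) z = \<gamma> x z + \<gamma> y z) \<and>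
     (\<forall>x y z. \<gamma> x (y + z) = \<gamma> x y + \<gamma> x z) \<and>
     (\<forall>x y. gpow g (-1) (g x + g y)
        = x + y + \<gamma> x y + gpow g (-1) (\<gamma> x y) + gpow g (-2) (\<gamma> x y)) \<and>
     (\<forall>x y z. \<gamma> (\<gamma> x y) z = 0) \<and>
     (\<forall>x y. gpow g (-1) (\<gamma> x y) = \<gamma> (g x) y)"

definition Rad :: "('a \<Rightarrow> 'a \<Rightarrow> 'a::zero) \<Rightarrow> 'a set" where
  "Rad \<gamma> = {x. \<forall>y. \<gamma> x y = 0}"

text \<open>r(g,gamma); the value 0 encodes \<infinity>.\<close>
definition rpar :: "('a::comm_monoid_add \<Rightarrow> 'a) \<Rightarrow> ('a \<Rightarrow> 'a \<Rightarrow> 'a) \<Rightarrow> nat" where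
  "rpar g \<gamma> = (if \<exists>r>0. \<forall>x. (\<Sum>k<r. (g ^^ k) x) \<in> Rad \<gamma>
                then LEAST r. r > 0 \<and> (\<forall>x. (\<Sum>k<r. (g ^^ k) x) \<in> Rad \<gamma>) else 0)"

text \<open>Order |g| of the permutation g; the value 0 encodes \<infinity>.\<close>
definition perm_order :: "('a \<Rightarrow> 'a) \<Rightarrow> nat" where
  "perm_order g = (if \<exists>m>0. g ^^ m = id then LEAST m. m > 0 \<and> g ^^ m = id else 0)"

definition Iset :: "int \<Rightarrow> int \<Rightarrow> int set" where
  "Iset i j = (if i = j then {} else if i < j then {i..j-1} else {j..i-1})"

definition Sig :: "('a::comm_monoid_add \<Rightarrow> 'a) \<Rightarrow> ('a \<Rightarrow> 'a \<Rightarrow> 'a) \<Rightarrow> int set \<Rightarrow> 'a \<Rightarrow> 'a \<Rightarrow> 'a" where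
  "Sig g \<gamma> U x y = (\<Sum>k\<in>U. gpow g (- k) (\<gamma> x y))"

text \<open>The cyclic group C = <b> of order n (n = 0 meaning infinite) is modelled as
  Z/nZ with canonical representatives (i mod n; for n = 0 this is i itself).
  The element (b^i, x) of C \<ltimes> X is the pair (i mod n, x).\<close>
definition sd_carrier :: "nat \<Rightarrow> (int \<times> 'a) set" where
  "sd_carrier n = {(i, x). i mod int n = i}"

definition sd_elem :: "nat \<Rightarrow> int \<Rightarrow> 'a \<Rightarrow> int \<times> 'a" where
  "sd_elem n i x = (i mod int n, x)"

definition sd_mult :: "nat \<Rightarrow> ('a::ab_group_add \<Rightarrow> 'a) \<Rightarrow> ('a \<Rightarrow> 'a \<Rightarrow> 'a)
     \<Rightarrow> int \<times> 'a \<Rightarrow> int \<times> 'a \<Rightarrow> int \<times> 'a" where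
  "sd_mult n g \<gamma> u v = (case u of (i, x) \<Rightarrow> case v of (j, y) \<Rightarrow>
      ((i + j) mod int n, gpow g (- j) x + y + Sig g \<gamma> (Iset (i + j) (- j)) x y))"

definition sd_assoc :: "nat \<Rightarrow> ('a::ab_group_add \<Rightarrow> 'a) \<Rightarrow> ('a \<Rightarrow> 'a \<Rightarrow> 'a)
     \<Rightarrow> int \<times> 'a \<Rightarrow> int \<times> 'a \<Rightarrow> int \<times> 'a \<Rightarrow> int \<times> 'a" where
  "sd_assoc n g \<gamma> u v w = (THE a. a \<in> sd_carrier n \<and>
      sd_mult n g \<gamma> (sd_mult n g \<gamma> u (sd_mult n g \<gamma> v w)) a
        = sd_mult n g \<gamma> (sd_mult n g \<gamma> u v) w)"

end

theory Submission imports Defs begin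

text \<open>By (C3), \<open>g\<^sup>-\<^sup>m (\<gamma> x y) = \<gamma> (g\<^sup>m x) y\<close>, so
  \<open>\<Sigma>\<^bsub>I(a,b)\<^esub>(x,y) = \<Sum>\<^bsub>m\<in>I(a,b)\<^esub> \<gamma> (g\<^sup>m x) y\<close>. All these values lie in the
  radical and have order 2, and since \<open>I(a,c)\<close> is the symmetric difference of \<open>I(a,b)\<close> and
  \<open>I(b,c)\<close> the map \<open>(a,b) \<mapsto> \<Sigma>\<^bsub>I(a,b)\<^esub>\<close> is a cocycle:
  \<open>\<Sigma>\<^bsub>I(a,b)\<^esub> = \<Sigma>\<^bsub>I(0,a)\<^esub> + \<Sigma>\<^bsub>I(0,b)\<^esub>\<close>. Iterating (C1) shows that \<open>g\<^sup>t\<close> is additive up to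
  the correction term \<open>\<Sigma>\<^bsub>I(2t,-t)\<^esub>\<close>. With these rules both bracketings of a triple product
  expand into the same sum of powers plus such correction terms, which cancel in pairs
  except for the three terms of the associator. Reducing exponents modulo \<open>n\<close> is harmless
  because \<open>g\<^sup>n = id\<close> and \<open>\<Sigma>\<close> over a full period vanishes, both thanks to the divisibility
  hypotheses. Finally, right multiplication by \<open>(1, S)\<close> with \<open>S\<close> in the radical just adds \<open>S\<close>
  to the second coordinate, so the associator can be read off.\<close>

lemma gpow_0 [simp]: "gpow g 0 = id"
  by (simp add: gpow_def fun_eq_iff)

lemma gpow_minus_one: "gpow g (-1) = inv g"
  by (simp add: gpow_def fun_eq_iff)

lemma gpow_of_nat: "gpow g (int m) = g ^^ m"
  by (simp add: gpow_def)

lemma gpow_succ: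
  assumes "bij g"
  shows "gpow g (k + 1) x = g (gpow g k x)"
proof -
  have g_inv: "g (inv g y) = y" for y
    using assms by (simp add: bij_def surj_f_inv_f)
  consider "0 \<le> k" | "k = -1" | "k < -1" by linarith
  then show ?thesis
  proof cases
    case 1
    then have "nat (k + 1) = Suc (nat k)" by simp
    with 1 show ?thesis by (simp add: gpow_def)
  next
    case 2
    then show ?thesis by (simp add: gpow_def g_inv)
  next
    case 3
    then have "nat (- k) = Suc (nat (- (k + 1)))" by simp
    with 3 show ?thesis by (simp add: gpow_def g_inv)
  qed
qed

lemma gpow_pred:
  assumes "bij g"
  shows "gpow g (k - 1) x = inv g (gpow g k x)"
  using gpow_succ[OF assms, of "k - 1" x] assms by (simp add: bij_def inv_f_f)

lemma gpow_add:
  assumes "bij g"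
  shows "gpow g (a + b) x = gpow g a (gpow g b x)"
proof (induction a rule: int_induct[where k = 0])
  case (step1 i)
  then show ?case
    using gpow_succ[OF assms, of "i + b"] gpow_succ[OF assms, of i] by (simp add: ac_simps)
next
  case (step2 i)
  then show ?case
    using gpow_pred[OF assms, of "i + b"] gpow_pred[OF assms, of i] by (simp add: algebra_simps)
qed simp

lemma funpow_eq_id_if_perm_order_dvd:
  assumes "perm_order g dvd n" and "n > 0"
  shows "g ^^ n = id"
proof -
  have ex: "\<exists>m>0. g ^^ m = id"
    using assms by (auto simp: perm_order_def split: if_splits)
  then have "g ^^ perm_order g = id"
    unfolding perm_order_def using LeastI_ex[of "\<lambda>m. m > 0 \<and> g ^^ m = id"] by auto
  moreover obtain c where "n = perm_order g * c"
    using assms(1) by blast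
  ultimately show ?thesis
    by (simp add: funpow_mult[symmetric])
qed

lemma Iset_commute: "Iset a b = Iset b a"
  by (simp add: Iset_def)

lemma Iset_self [simp]: "Iset a a = {}"
  by (simp add: Iset_def)

lemma finite_Iset [simp]: "finite (Iset a b)"
  by (simp add: Iset_def)

lemma Iset_succ: "Iset a (a + 1) = {a}"
  by (simp add: Iset_def)

lemma Iset_symmetric_difference: "Iset a c = (Iset a b - Iset b c) \<union> (Iset b c - Iset a b)"
  by (auto simp: Iset_def)

lemma sum_symmetric_difference_of_order_two:
  fixes f :: "'b \<Rightarrow> 'a::ab_group_add"
  assumes "finite A" "finite B" and "\<And>x. f x + f x = 0"
  shows "sum f ((A - B) \<union> (B - A)) = sum f A + sum f B"
proof -
  have "sum f A = sum f (A \<inter> B) + sum f (A - B)"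
    using assms(1) by (rule sum.Int_Diff)
  moreover have "sum f B = sum f (A \<inter> B) + sum f (B - A)"
    using sum.Int_Diff[OF assms(2), of f A] by (simp add: Int_commute)
  moreover have "sum f (A \<inter> B) + sum f (A \<inter> B) = 0"
    by (simp add: sum.distrib[symmetric] assms(3))
  moreover have "sum f ((A - B) \<union> (B - A)) = sum f (A - B) + sum f (B - A)"
    using assms(1,2) by (intro sum.union_disjoint) auto
  ultimately show ?thesis
    by (simp add: algebra_simps)
qed

locale cpair =
  fixes g :: "'a::ab_group_add \<Rightarrow> 'a" and \<gamma> :: "'a \<Rightarrow> 'a \<Rightarrow> 'a"
  assumes construction_pair: "construction_pair g \<gamma>"
begin

lemma bij: "bij g"
  using construction_pair by (simp add: construction_pair_def)

lemma gamma_commute: "\<gamma> x y = \<gamma> y x"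
  using construction_pair by (simp add: construction_pair_def)

lemma gamma_self: "\<gamma> x x = 0"
  using construction_pair by (simp add: construction_pair_def)

lemma gamma_add_left: "\<gamma> (x + y) z = \<gamma> x z + \<gamma> y z"
  using construction_pair by (simp add: construction_pair_def)

lemma gamma_add_right: "\<gamma> x (y + z) = \<gamma> x y + \<gamma> x z"
  using construction_pair by (simp add: construction_pair_def)

lemma gamma_gamma: "\<gamma> (\<gamma> x y) z = 0"
  using construction_pair unfolding construction_pair_def by blast

lemma inv_gamma: "inv g (\<gamma> x y) = \<gamma> (g x) y"
  using construction_pair by (simp add: construction_pair_def gpow_minus_one)

lemma inv_add: "inv g (g x + g y) = x + y + \<gamma> x y + inv g (\<gamma> x y) + inv g (inv g (\<gamma> x y))"
proof -
  have "gpow g (-2) z = inv g (inv g z)" for z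
    using gpow_add[OF bij, of "-1" "-1" z] by (simp add: gpow_minus_one)
  then show ?thesis
    using construction_pair by (simp add: construction_pair_def gpow_minus_one)
qed

lemma g_inv [simp]: "g (inv g y) = y"
  using bij by (simp add: bij_def surj_f_inv_f)

lemma inv_g [simp]: "inv g (g y) = y"
  using bij by (simp add: bij_def inv_f_f)

lemma gamma_zero_left [simp]: "\<gamma> 0 x = 0"
  using gamma_add_left[of 0 0 x] by simp

lemma gamma_zero_right [simp]: "\<gamma> x 0 = 0"
  using gamma_add_right[of x 0 0] by simp

lemma gamma_double: "\<gamma> x y + \<gamma> x y = 0"
proof -
  have "0 = \<gamma> (x + y) (x + y)"
    by (simp add: gamma_self)
  also have "\<dots> = \<gamma> x x + \<gamma> y x + (\<gamma> x y + \<gamma> y y)"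
    by (simp add: gamma_add_left gamma_add_right)
  finally show ?thesis
    by (simp add: gamma_self gamma_commute[of y x])
qed

lemma inv_zero [simp]: "inv g 0 = 0"
  using inv_gamma[of 0 0] by simp

lemma g_zero [simp]: "g 0 = 0"
  using g_inv[of 0] by simp

lemma gpow_zero [simp]: "gpow g t 0 = 0"
  by (induction t rule: int_induct[where k = 0]) (simp_all add: gpow_succ[OF bij] gpow_pred[OF bij])

lemma gpow_gamma: "gpow g (- m) (\<gamma> x y) = \<gamma> (gpow g m x) y"
proof (induction m rule: int_induct[where k = 0])
  case (step1 i)
  have "gpow g (- (i + 1)) (\<gamma> x y) = inv g (gpow g (- i) (\<gamma> x y))"
    using gpow_pred[OF bij, of "- i"] by simp
  then show ?case
    using step1 by (simp add: inv_gamma gpow_succ[OF bij])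
next
  case (step2 i)
  have "gpow g (- (i - 1)) (\<gamma> x y) = g (gpow g (- i) (\<gamma> x y))"
    using gpow_succ[OF bij, of "- i"] by simp
  also have "\<dots> = g (inv g (\<gamma> (gpow g (i - 1) x) y))"
    using step2 inv_gamma gpow_succ[OF bij, of "i - 1" x] by simp
  finally show ?case
    by simp
qed simp

lemma gamma_gpow_commute: "\<gamma> (gpow g a x) y = \<gamma> (gpow g a y) x"
  using gpow_gamma[of a x y] gpow_gamma[of a y x] gamma_commute by metis

subsection \<open>The radical\<close>

lemma gamma_Rad_left: "r \<in> Rad \<gamma> \<Longrightarrow> \<gamma> r y = 0"
  by (simp add: Rad_def)

lemma gamma_Rad_right: "r \<in> Rad \<gamma> \<Longrightarrow> \<gamma> y r = 0"
  by (simp add: Rad_def gamma_commute[of y])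

lemma gamma_in_Rad: "\<gamma> x y \<in> Rad \<gamma>"
  by (simp add: Rad_def gamma_gamma)

lemma zero_in_Rad: "0 \<in> Rad \<gamma>"
  by (simp add: Rad_def)

lemma Rad_add: "r \<in> Rad \<gamma> \<Longrightarrow> s \<in> Rad \<gamma> \<Longrightarrow> r + s \<in> Rad \<gamma>"
  by (simp add: Rad_def gamma_add_left)

lemma Rad_uminus:
  assumes "r \<in> Rad \<gamma>"
  shows "- r \<in> Rad \<gamma>"
proof -
  have "\<gamma> (- r) y + \<gamma> r y = 0" for y
    using gamma_add_left[of "- r" r y] by simp
  with assms show ?thesis
    by (simp add: Rad_def)
qed

lemma Rad_sum: "(\<And>m. m \<in> U \<Longrightarrow> f m \<in> Rad \<gamma>) \<Longrightarrow> sum f U \<in> Rad \<gamma>"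
  by (induction U rule: infinite_finite_induct) (auto intro: Rad_add zero_in_Rad)

lemma gpow_in_Rad: "r \<in> Rad \<gamma> \<Longrightarrow> gpow g t r \<in> Rad \<gamma>"
  using gpow_gamma[of t r] by (simp add: Rad_def)

lemma inv_add_Rad:
  assumes "r \<in> Rad \<gamma>"
  shows "inv g (a + r) = inv g a + inv g r"
proof -
  have "inv g r \<in> Rad \<gamma>"
    using gpow_in_Rad[OF assms, of "-1"] by (simp add: gpow_minus_one)
  then show ?thesis
    using inv_add[of "inv g a" "inv g r"] by (simp add: gamma_Rad_right)
qed

lemma g_in_Rad: "r \<in> Rad \<gamma> \<Longrightarrow> g r \<in> Rad \<gamma>"
  using inv_gamma[of r] by (simp add: Rad_def)

lemma g_add_Rad: "r \<in> Rad \<gamma> \<Longrightarrow> g (a + r) = g a + g r"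
  using inv_add_Rad[of "g r" "g a"] g_in_Rad by (metis g_inv inv_g)

lemma gpow_add_Rad: "r \<in> Rad \<gamma> \<Longrightarrow> gpow g t (a + r) = gpow g t a + gpow g t r"
proof (induction t arbitrary: a r rule: int_induct[where k = 0])
  case (step1 i)
  then show ?case
    by (simp add: gpow_succ[OF bij] g_add_Rad gpow_in_Rad)
next
  case (step2 i)
  then show ?case
    by (simp add: gpow_pred[OF bij] inv_add_Rad gpow_in_Rad)
qed simp

lemma gpow_sum_Rad:
  "(\<And>m. m \<in> U \<Longrightarrow> f m \<in> Rad \<gamma>) \<Longrightarrow> gpow g t (sum f U) = (\<Sum>m\<in>U. gpow g t (f m))"
proof (induction U rule: infinite_finite_induct)
  case (insert x F)
  then show ?case
    using gpow_add_Rad[of "f x" t "sum f F"] by (simp add: add.commute)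
qed auto

subsection \<open>The sums \<open>\<Sigma>\<^bsub>I(a,b)\<^esub>\<close>\<close>

abbreviation sig :: "int \<Rightarrow> int \<Rightarrow> 'a \<Rightarrow> 'a \<Rightarrow> 'a" where
  "sig a b x y \<equiv> Sig g \<gamma> (Iset a b) x y"

lemma sig_eq: "sig a b x y = (\<Sum>m\<in>Iset a b. \<gamma> (gpow g m x) y)"
  unfolding Sig_def by (simp add: gpow_gamma)

lemma Sig_empty [simp]: "Sig g \<gamma> {} x y = 0"
  by (simp add: Sig_def)

lemma sig_commute_bounds: "sig a b x y = sig b a x y"
  by (simp add: Iset_commute)

lemma sig_in_Rad: "sig a b x y \<in> Rad \<gamma>"
  unfolding Sig_def using gpow_in_Rad gamma_in_Rad by (blast intro: Rad_sum)

lemma sig_double: "sig a b x y + sig a b x y = 0"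
  unfolding sig_eq sum.distrib[symmetric] by (simp add: gamma_double)

lemma sig_commute: "sig a b x y = sig a b y x"
  unfolding sig_eq by (simp only: gamma_gpow_commute)

lemma sig_add_right: "sig a b x (y + z) = sig a b x y + sig a b x z"
  unfolding sig_eq by (simp add: gamma_add_right sum.distrib)

lemma sig_add_left: "sig a b (x + y) z = sig a b x z + sig a b y z"
  using sig_add_right sig_commute by metis

lemma sig_Rad_right: "r \<in> Rad \<gamma> \<Longrightarrow> sig a b x r = 0"
  unfolding sig_eq by (simp add: gamma_Rad_right)

lemma sig_Rad_left: "r \<in> Rad \<gamma> \<Longrightarrow> sig a b r y = 0"
  using sig_Rad_right sig_commute by metis

lemma sig_shift: "sig (a + s) (b + s) x y = (\<Sum>m\<in>Iset a b. \<gamma> (gpow g (m + s) x) y)"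
  unfolding sig_eq
  by (rule sum.reindex_bij_witness[of _ "\<lambda>m. m + s" "\<lambda>m. m - s"]) (auto simp: Iset_def)

lemma sig_gpow_left: "sig a b (gpow g s x) y = sig (a + s) (b + s) x y"
  using sig_shift[of a s b x y] unfolding sig_eq by (simp add: gpow_add[OF bij, symmetric])

lemma sig_gpow_right: "sig a b x (gpow g s y) = sig (a + s) (b + s) x y"
  using sig_gpow_left sig_commute by metis

lemma gpow_sig: "gpow g t (sig a b x y) = sig (a - t) (b - t) x y"
proof -
  have "gpow g t (sig a b x y) = (\<Sum>k\<in>Iset a b. gpow g (t - k) (\<gamma> x y))"
    unfolding Sig_def
    by (subst gpow_sum_Rad) (simp_all add: gamma_in_Rad gpow_in_Rad gpow_add[OF bij, symmetric])
  also have "\<dots> = sig (a - t) (b - t) x y"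
    unfolding Sig_def
    by (rule sum.reindex_bij_witness[of _ "\<lambda>k. k + t" "\<lambda>k. k - t"]) (auto simp: Iset_def)
  finally show ?thesis .
qed

lemma sig_cocycle: "sig a b x y + sig b c x y = sig a c x y"
  unfolding Sig_def Iset_symmetric_difference[of a c b]
  by (rule sum_symmetric_difference_of_order_two[symmetric])
    (simp_all add: gpow_add_Rad[OF gamma_in_Rad, symmetric] gamma_double)

lemma sig_through_zero: "sig a b x y = sig 0 a x y + sig 0 b x y"
  using sig_cocycle[of a 0 x y b] sig_commute_bounds[of a 0] by simp

lemma sig_succ: "sig a (a + 1) x y = \<gamma> (gpow g a x) y"
  by (simp add: Sig_def Iset_succ gpow_gamma)

lemma gpow_minus_one_add: "inv g (x + y) = inv g x + inv g y + sig (-2) 1 x y"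
proof -
  have I: "Iset (-2) 1 = {-2, -1, 0::int}"
    by (auto simp: Iset_def)
  have inv2: "gpow g (-2) z = inv g (inv g z)" for z
    using gpow_add[OF bij, of "-1" "-1" z] by (simp add: gpow_minus_one)
  let ?a = "inv g x" and ?b = "inv g y"
  have e1: "\<gamma> ?a ?b = \<gamma> (gpow g (-2) x) y"
    using gamma_gpow_commute[of "-1" ?a y] gamma_commute by (simp add: gpow_minus_one inv2)
  have e2: "inv g (\<gamma> ?a ?b) = \<gamma> (gpow g (-1) x) y"
    using inv_gamma[of ?a ?b] gamma_gpow_commute[of "-1" y x] gamma_commute
    by (simp add: gpow_minus_one)
  have e3: "inv g (inv g (\<gamma> ?a ?b)) = \<gamma> x y"
    using e2 inv_gamma[of ?a y] by (simp add: gpow_minus_one)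
  have sig3: "sig (-2) 1 x y = \<gamma> (gpow g (-2) x) y + (\<gamma> (gpow g (-1) x) y + \<gamma> x y)"
    unfolding sig_eq by (simp add: I)
  have "inv g (x + y) = ?a + ?b + \<gamma> ?a ?b + inv g (\<gamma> ?a ?b) + inv g (inv g (\<gamma> ?a ?b))"
    using inv_add[of ?a ?b] by simp
  also have "\<dots> = ?a + ?b + sig (-2) 1 x y"
    unfolding e3 unfolding e2 unfolding e1 sig3 by (simp add: add.assoc)
  finally show ?thesis .
qed

text \<open>The one-step case is (C1); the induction step re-applies it to \<open>g\<^sup>s x + g\<^sup>s y\<close> and
  merges the two correction terms by the cocycle rule.\<close>

lemma gpow_add_sig: "gpow g t (x + y) = gpow g t x + gpow g t y + sig (2 * t) (- t) x y"
proof -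
  have step: "inv g (gpow g s x + gpow g s y + sig (2 * s) (- s) x y)
      = gpow g (s - 1) x + gpow g (s - 1) y + sig (2 * (s - 1)) (- (s - 1)) x y" for s
  proof -
    have inv_gpow: "inv g (gpow g s z) = gpow g (s - 1) z" for z
      using gpow_pred[OF bij, of s z] by simp
    have "sig (-2) 1 (gpow g s x) (gpow g s y) = sig (2 * (s - 1)) (2 * s + 1) x y"
      using sig_gpow_left[of "-2" 1 s x] sig_gpow_right[of "-2 + s" "1 + s" x s y]
      by (simp add: algebra_simps)
    moreover have "inv g (sig (2 * s) (- s) x y) = sig (2 * s + 1) (- (s - 1)) x y"
      using gpow_sig[of "-1" "2 * s" "- s" x y] by (simp add: gpow_minus_one)
    moreover have "inv g (gpow g s x + gpow g s y + sig (2 * s) (- s) x y)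
        = inv g (gpow g s x + gpow g s y) + inv g (sig (2 * s) (- s) x y)"
      by (rule inv_add_Rad[OF sig_in_Rad])
    ultimately show ?thesis
      using gpow_minus_one_add[of "gpow g s x" "gpow g s y"]
        sig_cocycle[of "2 * (s - 1)" "2 * s + 1" x y "- (s - 1)"]
      by (simp add: inv_gpow add.assoc)
  qed
  show ?thesis
  proof (induction t rule: int_induct[where k = 0])
    case (step1 i)
    have "inv g (gpow g (i + 1) (x + y))
        = inv g (gpow g (i + 1) x + gpow g (i + 1) y + sig (2 * (i + 1)) (- (i + 1)) x y)"
      using step1 step[of "i + 1"] gpow_pred[OF bij, of "i + 1"] by simp
    then show ?case
      by (metis g_inv)
  next
    case (step2 i)
    then show ?case
      using step[of i] by (simp add: gpow_pred[OF bij])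
  qed simp
qed

text \<open>Second coordinate of \<open>(b\<^sup>i, x)(b\<^sup>j, y)\<close>, with exponents not reduced modulo \<open>|C|\<close>.\<close>

definition mult_snd :: "int \<Rightarrow> 'a \<Rightarrow> int \<Rightarrow> 'a \<Rightarrow> 'a" where
  "mult_snd i x j y = gpow g (- j) x + y + sig (i + j) (- j) x y"

lemma mult_snd_assoc:
  "mult_snd i x (j + k) (mult_snd j y k z)
     + (sig (i + j) (i + j + k) x y + sig (i + k) (i + j + k) x z + sig (j + k) (i + j + k) y z)
   = mult_snd (i + j) (mult_snd i x j y) k z"
proof -
  \<comment> \<open>Expressed through \<open>G a = \<Sigma>\<^bsub>I(0,a)\<^esub>\<close>, both sides become sums of \<open>G\<close>-terms of order 2,
    which cancel in pairs once their integer arguments are normalised. The shifts in \<open>left\<close>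
    and \<open>right\<close> are kept in the form \<open>a + - k\<close> so that equal arguments reach the same
    normal form.\<close>
  define G where "G a p q = sig 0 a p q" for a p q
  have sig_G: "sig a b p q = G a p q + G b p q" for a b p q
    unfolding G_def by (rule sig_through_zero)
  have G_cancel: "G a p q + (G a p q + w) = w" for a p q w
    unfolding G_def using sig_double by (simp add: add.assoc[symmetric])
  have G_double: "G a p q + G a p q = 0" for a p q
    unfolding G_def by (rule sig_double)
  have left: "sig a b x (mult_snd j y k z) = sig (a + - k) (b + - k) x y + sig a b x z" for a b
    unfolding mult_snd_def sig_add_right sig_gpow_right sig_Rad_right[OF sig_in_Rad]
    by (simp only: add_0_right)
  have right: "sig a b (mult_snd i x j y) z = sig (a + - j) (b + - j) x z + sig a b y z" for a b
    unfolding mult_snd_def sig_add_left sig_gpow_left sig_Rad_left[OF sig_in_Rad]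
    by (simp only: add_0_right)
  have twisted: "gpow g (- k) (mult_snd i x j y)
      = gpow g (- (j + k)) x + gpow g (- k) y + sig (- 2 * k) k (gpow g (- j) x) y
        + sig (i + j + k) (k - j) x y"
  proof -
    have "gpow g (- k) (gpow g (- j) x) = gpow g (- (j + k)) x"
      using gpow_add[OF bij, of "- k" "- j" x] by (simp add: add.commute)
    then show ?thesis
      unfolding mult_snd_def gpow_add_Rad[OF sig_in_Rad] gpow_add_sig gpow_sig
      by (simp add: sig_Rad_right[OF sig_in_Rad])
  qed
  show ?thesis
    unfolding mult_snd_def[of i x "j + k"] mult_snd_def[of "i + j" _ k] left right twisted
    unfolding mult_snd_def sig_gpow_left
    by (simp only: sig_G, simp add: algebra_simps, simp only: G_cancel G_double)
qed

end

locale cyclic_cpair = cpair +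
  fixes n :: nat
  assumes order_dvd: "n > 0 \<Longrightarrow> perm_order g dvd n \<and> rpar g \<gamma> dvd n"
begin

lemma gpow_period: "gpow g (t + int n * c) x = gpow g t x"
proof (cases "n = 0")
  case False
  then have "g ^^ n = id"
    using order_dvd by (intro funpow_eq_id_if_perm_order_dvd) auto
  then have "gpow g (int n) = id"
    by (simp add: gpow_of_nat)
  then have "gpow g (int n * c) x = x" for x
  proof (induction c arbitrary: x rule: int_induct[where k = 0])
    case (step1 i)
    then show ?case
      using gpow_add[OF bij, of "int n * i" "int n" x] by (simp add: distrib_left)
  next
    case (step2 i)
    then show ?case
      using gpow_add[OF bij, of "int n * (i - 1)" "int n" x] step2(2)[of "gpow g (int n * (i - 1)) x"]
      by (simp add: right_diff_distrib)
  qed simp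
  then show ?thesis
    using gpow_add[OF bij, of t "int n * c" x] by simp
qed simp

lemma sum_funpow_period_in_Rad:
  assumes "n > 0"
  shows "(\<Sum>k<n. (g ^^ k) w) \<in> Rad \<gamma>"
proof -
  let ?r = "rpar g \<gamma>"
  have dvd: "?r dvd n"
    using order_dvd assms by simp
  have ex: "\<exists>r>0. \<forall>x. (\<Sum>k<r. (g ^^ k) x) \<in> Rad \<gamma>"
    using dvd assms by (auto simp: rpar_def split: if_splits)
  then have r: "\<forall>x. (\<Sum>k<?r. (g ^^ k) x) \<in> Rad \<gamma>"
    unfolding rpar_def
    using LeastI_ex[of "\<lambda>r. r > 0 \<and> (\<forall>x. (\<Sum>k<r. (g ^^ k) x) \<in> Rad \<gamma>)"] by auto
  obtain c where c: "n = c * ?r"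
    using dvd by (metis dvd_def mult.commute)
  have block: "(\<Sum>k\<in>{m * ?r..<m * ?r + ?r}. (g ^^ k) w) = (\<Sum>k<?r. (g ^^ k) ((g ^^ (m * ?r)) w))" for m
  proof -
    have "(\<Sum>k\<in>{m * ?r..<m * ?r + ?r}. (g ^^ k) w) = (\<Sum>k\<in>{0 + m * ?r..<?r + m * ?r}. (g ^^ k) w)"
      by (simp add: add.commute)
    also have "\<dots> = (\<Sum>k<?r. (g ^^ k) ((g ^^ (m * ?r)) w))"
      by (subst sum.shift_bounds_nat_ivl) (simp add: funpow_add atLeast0LessThan)
    finally show ?thesis .
  qed
  have "(\<Sum>k<n. (g ^^ k) w) = (\<Sum>m<c. \<Sum>k<?r. (g ^^ k) ((g ^^ (m * ?r)) w))"
    unfolding c sum.nat_group[symmetric] block ..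
  then show ?thesis
    using r by (simp add: Rad_sum)
qed

lemma sig_full_period: "sig a (a + int n) x y = 0"
proof (cases "n = 0")
  case False
  have "sig a (a + int m) x y = \<gamma> (\<Sum>k<m. (g ^^ k) (gpow g a x)) y" for m
  proof (induction m)
    case (Suc m)
    have shift: "gpow g (a + int m) x = (g ^^ m) (gpow g a x)"
      using gpow_add[OF bij, of "int m" a x] by (simp add: gpow_of_nat add.commute)
    have "sig a (a + int m + 1) x y = \<gamma> (\<Sum>k<Suc m. (g ^^ k) (gpow g a x)) y"
      unfolding sig_cocycle[of a "a + int m" x y "a + int m + 1", symmetric] sig_succ Suc.IH shift
      by (simp add: gamma_add_left)
    moreover have "a + int (Suc m) = a + int m + 1"
      by simp
    ultimately show ?case
      by (simp only:)
  qed simp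
  then show ?thesis
    using sum_funpow_period_in_Rad[of "gpow g a x"] False by (simp add: gamma_Rad_left)
qed simp

lemma sig_period_multiple: "sig a (a + int n * c) x y = 0"
proof (induction c rule: int_induct[where k = 0])
  case (step1 i)
  then show ?case
    using sig_cocycle[of a "a + int n * i" x y "a + int n * (i + 1)"]
      sig_full_period[of "a + int n * i"] by (simp add: algebra_simps)
next
  case (step2 i)
  then show ?case
    using sig_cocycle[of a "a + int n * i" x y "a + int n * (i - 1)"]
      sig_full_period[of "a + int n * (i - 1)"] sig_commute_bounds[of "a + int n * i"]
    by (simp add: algebra_simps)
qed simp

lemma sig_period_left: "sig (a + int n * c) b x y = sig a b x y"
  using sig_cocycle[of "a + int n * c" a x y b] sig_period_multiple[of a c] sig_commute_bounds[of a "a + int n * c"]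
  by simp

lemma sig_period_right: "sig a (b + int n * c) x y = sig a b x y"
  using sig_period_left sig_commute_bounds by metis

lemma sd_mult_sd_elem:
  "sd_mult n g \<gamma> (sd_elem n i x) (sd_elem n j y) = sd_elem n (i + j) (mult_snd i x j y)"
proof -
  have j: "j mod int n = j + int n * (- (j div int n))"
    and i: "i mod int n = i + int n * (- (i div int n))"
    using minus_mult_div_eq_mod[of _ "int n"] by simp_all
  have "gpow g (- (j mod int n)) x = gpow g (- j) x"
    unfolding j using gpow_period[of "- j" "j div int n" x] by simp
  moreover have "sig (i mod int n + j mod int n) (- (j mod int n)) x y = sig (i + j) (- j) x y"
    unfolding i j
    using sig_period_left[of "i + j" "- (i div int n) - j div int n" "- j + int n * (j div int n)"]
      sig_period_right[of "i + j" "- j" "j div int n"]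
    by (simp add: algebra_simps)
  ultimately show ?thesis
    by (simp add: sd_mult_def sd_elem_def mod_add_eq mult_snd_def)
qed

lemma sd_mult_eq_add_Rad_iff:
  assumes S: "S \<in> Rad \<gamma>"
  shows "(a \<in> sd_carrier n \<and> sd_mult n g \<gamma> (sd_elem n l L) a = sd_elem n l (L + S))
     \<longleftrightarrow> a = sd_elem n 0 S"
proof
  assume a: "a \<in> sd_carrier n \<and> sd_mult n g \<gamma> (sd_elem n l L) a = sd_elem n l (L + S)"
  obtain m w where aw: "a = (m, w)" and m: "m mod int n = m"
    using a by (cases a) (auto simp: sd_carrier_def)
  have prod: "sd_elem n (l + m) (mult_snd l L m w) = sd_elem n l (L + S)"
    using a aw m sd_mult_sd_elem[of l L m w] by (simp add: sd_elem_def)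
  then have "(l + m) mod int n = l mod int n"
    by (simp add: sd_elem_def)
  moreover have "m mod int n = ((l + m) mod int n - l mod int n) mod int n"
    by (simp add: mod_diff_eq)
  ultimately have "m mod int n = 0"
    by simp
  then have m0: "m = 0"
    using m by simp
  define d where "d = w - S"
  have "sig l 0 L w = sig l 0 L d"
    using sig_add_right[of l 0 L S d] sig_Rad_right[OF S] by (simp add: d_def)
  then have "d + sig l 0 L d = 0"
    using prod by (simp add: sd_elem_def m0 mult_snd_def d_def algebra_simps)
  then have d: "d = - sig l 0 L d"
    by (simp add: eq_neg_iff_add_eq_0)
  then have "d \<in> Rad \<gamma>"
    by (metis Rad_uminus sig_in_Rad)
  then have "d = 0"
    using d by (simp add: sig_Rad_right)
  then show "a = sd_elem n 0 S"
    by (simp add: aw m0 d_def sd_elem_def)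
next
  assume "a = sd_elem n 0 S"
  then show "a \<in> sd_carrier n \<and> sd_mult n g \<gamma> (sd_elem n l L) a = sd_elem n l (L + S)"
    using sd_mult_sd_elem[of l L 0 S]
    by (simp add: sd_carrier_def sd_elem_def mult_snd_def sig_Rad_right[OF S])
qed

end

theorem mainTheorem5:
  fixes g :: "'a::ab_group_add \<Rightarrow> 'a" and \<gamma> :: "'a \<Rightarrow> 'a \<Rightarrow> 'a" and n :: nat
  assumes "construction_pair g \<gamma>"
    and "n > 0 \<Longrightarrow> perm_order g dvd n \<and> rpar g \<gamma> dvd n"
  shows "sd_assoc n g \<gamma> (sd_elem n i x) (sd_elem n j y) (sd_elem n k z)
       = sd_elem n 0 (Sig g \<gamma> (Iset (i + j) (i + j + k)) x y
                    + Sig g \<gamma> (Iset (i + k) (i + j + k)) x z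
                    + Sig g \<gamma> (Iset (j + k) (i + j + k)) y z)"
proof -
  interpret cyclic_cpair g \<gamma> n
    using assms by unfold_locales auto
  let ?S = "sig (i + j) (i + j + k) x y + sig (i + k) (i + j + k) x z + sig (j + k) (i + j + k) y z"
  have "?S \<in> Rad \<gamma>"
    by (intro Rad_add sig_in_Rad)
  moreover have "sd_mult n g \<gamma> (sd_elem n i x) (sd_mult n g \<gamma> (sd_elem n j y) (sd_elem n k z))
      = sd_elem n (i + j + k) (mult_snd i x (j + k) (mult_snd j y k z))"
    by (simp add: sd_mult_sd_elem add.assoc)
  moreover have "sd_mult n g \<gamma> (sd_mult n g \<gamma> (sd_elem n i x) (sd_elem n j y)) (sd_elem n k z)
      = sd_elem n (i + j + k) (mult_snd i x (j + k) (mult_snd j y k z) + ?S)"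
    by (simp add: sd_mult_sd_elem mult_snd_assoc)
  ultimately show ?thesis
    unfolding sd_assoc_def by (simp add: sd_mult_eq_add_Rad_iff)
qed

end
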